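(* Let $\Phi = \{\xi = (\tau_L,\delta_L,\tau_R,\delta_R) \in \mathbb{R}^4 : \tau_L > |\delta_L + 1|,\ \tau_R < -|\delta_R+1|\}$, $\Phi^{(3)} = \{\xi \in \Phi : \delta_L > 0, \delta_R < 0\}$, $\Phi^{(4)} = \{\xi \in \Phi : \delta_L < 0, \delta_R > 0\}$. Let $\alpha(\xi) = \tau_L\tau_R + (\delta_L-1)(\delta_R-1)$ and $g(\xi) = (\tau_R^2 - 2\delta_R,\ \delta_R^2,\ \tau_L\tau_R - \delta_L - \delta_R,\ \delta_L\delta_R)$. For $\xi \in \Phi$ let $\lambda_L^u>1$ be the eigenvalue of $\begin{bmatrix}\tau_L & 1\\ -\delta_L & 0\end{bmatrix}$ of modulus greater than one, $\lambda_R^u<-1$ the eigenvalue of $\begin{bmatrix}\tau_R & 1\\ -\delta_R & 0\end{bmatrix}$ of modulus greater than one, and $$\phi^+(\xi) = \delta_R - \big(\tau_R + \delta_L + \delta_R - (1+\tau_R)\lambda_L^u\big)\lambda_L^u,\qquad \phi^-(\xi) = \delta_R - \big(\delta_R + \tau_R - (1+\lambda_R^u)\lambda_L^u\big)\lambda_L^u,$$ $\phi_{\min}(\xi) = \min[\phi^+(\xi),\phi^-(\xi)]$. For $n\ge 0$ let $$\mathcal{R}^{(3)}_n = \{\xi \in \Phi^{(3)} : \phi_{\min}(g^n(\xi)) > 0,\ \phi_{\min}(g^{n+1}(\xi)) \le 0,\ \alpha(\xi) < 0\},$$ and for $n \ge 1$ let $$\mathcal{R}^{(4)}_n = \{\xi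 \in \Phi^{(4)} : \phi_{\min}(g^n(\xi)) > 0,\ \phi_{\min}(g^{n+1}(\xi)) \le 0,\ \alpha(\xi) < 0,\ \alpha(g(\xi)) < 0\}.$$ If $\xi \in \mathcal{R}^{(4)}_n$ with $n \ge 1$, then $g(\xi) \in \mathcal{R}^{(3)}_{n-1}$.
   Context: $g^n$ denotes the $n$-fold composition of $g$; the conditions in the set definitions are understood to include that the relevant iterates $g^k(\xi)$ lie in $\Phi$, so that $\phi_{\min}$ is defined at them. *)

theory Defs
  imports Complex_Main
begin

type_synonym param = "real \<times> real \<times> real \<times> real"

definition Phi :: "param set" where
  "Phi = {(tL, dL, tR, dR). tL > \<bar>dL + 1\<bar> \<and> tR < - \<bar>dR + 1\<bar>}"

definition Phi3 :: "param set" where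
  "Phi3 = {(tL, dL, tR, dR). (tL, dL, tR, dR) \<in> Phi \<and> dL > 0 \<and> dR < 0}"

definition Phi4 :: "param set" where
  "Phi4 = {(tL, dL, tR, dR). (tL, dL, tR, dR) \<in> Phi \<and> dL < 0 \<and> dR > 0}"

definition alpha :: "param \<Rightarrow> real" where
  "alpha = (\<lambda>(tL, dL, tR, dR). tL * tR + (dL - 1) * (dR - 1))"

definition g :: "param \<Rightarrow> param" where
  "g = (\<lambda>(tL, dL, tR, dR). (tR\<^sup>2 - 2 * dR, dR\<^sup>2, tL * tR - dL - dR, dL * dR))"

text \<open>Characteristic polynomial of the companion matrix [[t, 1], [-d, 0]]:
  det [[t - l, 1], [-d, -l]] = (t - l) * (- l) + d.\<close>
definition charpoly :: "real \<Rightarrow> real \<Rightarrow> real \<Rightarrow> real" where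
  "charpoly t d l = (t - l) * (- l) - 1 * (- d)"

definition lamLu :: "param \<Rightarrow> real" where
  "lamLu = (\<lambda>(tL, dL, tR, dR). THE l. \<bar>l\<bar> > 1 \<and> charpoly tL dL l = 0)"

definition lamRu :: "param \<Rightarrow> real" where
  "lamRu = (\<lambda>(tL, dL, tR, dR). THE l. \<bar>l\<bar> > 1 \<and> charpoly tR dR l = 0)"

definition phi_plus :: "param \<Rightarrow> real" where
  "phi_plus = (\<lambda>(tL, dL, tR, dR).
     dR - (tR + dL + dR - (1 + tR) * lamLu (tL, dL, tR, dR)) * lamLu (tL, dL, tR, dR))"

definition phi_minus :: "param \<Rightarrow> real" where
  "phi_minus = (\<lambda>(tL, dL, tR, dR).
     dR - (dR + tR - (1 + lamRu (tL, dL, tR, dR)) * lamLu (tL, dL, tR, dR)) * lamLu (tL, dL, tR, dR))"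

definition phi_min :: "param \<Rightarrow> real" where
  "phi_min xi = min (phi_plus xi) (phi_minus xi)"

definition R3 :: "nat \<Rightarrow> param set" where
  "R3 n = {xi \<in> Phi3.
     (g ^^ n) xi \<in> Phi \<and> phi_min ((g ^^ n) xi) > 0 \<and>
     (g ^^ (n + 1)) xi \<in> Phi \<and> phi_min ((g ^^ (n + 1)) xi) \<le> 0 \<and>
     alpha xi < 0}"

definition R4 :: "nat \<Rightarrow> param set" where
  "R4 n = {xi \<in> Phi4.
     (g ^^ n) xi \<in> Phi \<and> phi_min ((g ^^ n) xi) > 0 \<and>
     (g ^^ (n + 1)) xi \<in> Phi \<and> phi_min ((g ^^ (n + 1)) xi) \<le> 0 \<and>
     alpha xi < 0 \<and> alpha (g xi) < 0}"

end

theory Submission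
  imports Defs
begin

text \<open>Since g shifts orbits by one step, the conditions on the iterates of xi of orders
  n and n + 1 are those on the iterates of g xi of orders n - 1 and n. What remains is that
  g maps the points of Phi4 with alpha < 0 into Phi3. The signs are immediate; the first
  inequality of Phi amounts to tauR^2 > (deltaR + 1)^2, and the second follows from
  alpha < 0 when deltaL deltaR + 1 >= 0 and from tauL tauR < - |deltaL + 1| |deltaR + 1|
  otherwise.\<close>

lemma abs_sq_plus_one_less:
  fixes t d :: real
  assumes "\<bar>d + 1\<bar> < \<bar>t\<bar>"
  shows "\<bar>d\<^sup>2 + 1\<bar> < t\<^sup>2 - 2 * d"
proof -
  have "(d + 1)\<^sup>2 < t\<^sup>2"
    using assms by (metis abs_ge_zero power2_abs power_strict_mono zero_less_numeral)
  then show ?thesis by (simp add: power2_eq_square algebra_simps)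
qed

lemma mult_less_neg_abs_mult:
  fixes tL dL tR dR :: real
  assumes "\<bar>dL + 1\<bar> < tL" and "tR < - \<bar>dR + 1\<bar>"
  shows "tL * tR < - (\<bar>dL + 1\<bar> * \<bar>dR + 1\<bar>)"
proof -
  have "\<bar>dL + 1\<bar> * \<bar>dR + 1\<bar> \<le> tL * \<bar>dR + 1\<bar>"
    using assms(1) by (intro mult_right_mono) auto
  also have "\<dots> < tL * (- tR)"
    using assms by (intro mult_strict_left_mono) auto
  finally show ?thesis by simp
qed

lemma mult_minus_sum_less_neg_abs:
  fixes tL dL tR dR :: real
  assumes "\<bar>dL + 1\<bar> < tL" and "tR < - \<bar>dR + 1\<bar>"
    and "tL * tR + (dL - 1) * (dR - 1) < 0"
  shows "tL * tR - dL - dR < - \<bar>dL * dR + 1\<bar>"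
proof (cases "dL * dR + 1 \<ge> 0")
  case True
  then show ?thesis using assms(3) by (simp add: algebra_simps)
next
  case False
  have "- (\<bar>dL + 1\<bar> * \<bar>dR + 1\<bar>) \<le> (dL + 1) * (dR + 1)"
    by (metis abs_ge_minus_self abs_mult minus_le_iff)
  with mult_less_neg_abs_mult[OF assms(1,2)] False show ?thesis
    by (simp add: algebra_simps)
qed

lemma g_in_Phi:
  assumes "xi \<in> Phi" and "alpha xi < 0"
  shows "g xi \<in> Phi"
proof -
  obtain tL dL tR dR where xi: "xi = (tL, dL, tR, dR)" by (cases xi) auto
  have L: "\<bar>dL + 1\<bar> < tL" and R: "tR < - \<bar>dR + 1\<bar>"
    using assms(1) by (auto simp: Phi_def xi)
  have "\<bar>dR\<^sup>2 + 1\<bar> < tR\<^sup>2 - 2 * dR"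
    using R by (intro abs_sq_plus_one_less) linarith
  with mult_minus_sum_less_neg_abs[OF L R] assms(2) show ?thesis
    by (simp add: Phi_def g_def alpha_def xi)
qed

lemma g_Phi4_in_Phi3:
  assumes "xi \<in> Phi4" and "alpha xi < 0"
  shows "g xi \<in> Phi3"
proof -
  obtain tL dL tR dR where xi: "xi = (tL, dL, tR, dR)" by (cases xi) auto
  have "xi \<in> Phi" "dL < 0" "dR > 0" using assms(1) by (auto simp: Phi4_def xi)
  moreover from this have "dL * dR < 0" by (simp add: mult_neg_pos)
  ultimately show ?thesis
    using g_in_Phi[OF _ assms(2)] by (simp add: Phi3_def g_def xi)
qed

theorem proposition9p1:
  fixes xi :: param and n :: nat
  assumes "n \<ge> 1" and "xi \<in> R4 n"
  shows "g xi \<in> R3 (n - 1)"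
proof -
  obtain m where n: "n = Suc m" using assms(1) by (cases n) auto
  have "(g ^^ m) (g xi) = (g ^^ n) xi" "(g ^^ (m + 1)) (g xi) = (g ^^ (n + 1)) xi"
    by (simp_all add: n funpow_Suc_right del: funpow.simps)
  with assms(2) g_Phi4_in_Phi3[of xi] show ?thesis
    unfolding R4_def R3_def n by auto
qed

end
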